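(* Let $0<q<1$, let $n\ge1$, and let $a_1,\dots,a_n,b_1,\dots,b_n$ be non-negative integers. Define the dual argument lists \[ \mathbf p = \big(a_1+2,\{1\}^{b_1},\,a_2+2,\{1\}^{b_2},\,\dots,\,a_n+2,\{1\}^{b_n}\big),\qquad \mathbf p' = \big(b_n+2,\{1\}^{a_n},\,b_{n-1}+2,\{1\}^{a_{n-1}},\,\dots,\,b_1+2,\{1\}^{a_1}\big). \] Then for every non-negative integer $m$, $Z[\mathbf p;m]=Z[\mathbf p';m]$.
   Context: Fix $0<q<1$. For real $x$, $[x]_q := (1-q^x)/(1-q)$. For positive integers $s_1,\dots,s_N$ with $s_1>1$, the multiple $q$-zeta value is $\zeta[s_1,\dots,s_N] := \sum_{k_1>\cdots>k_N>0}\prod_{j=1}^N q^{(s_j-1)k_j}/[k_j]_q^{s_j}$ (sum over positive integers). $\{1\}^b$ denotes $b$ consecutive copies of $1$ in an argument list (empty if $b=0$). For such $s_1,\dots,s_N$ and a non-negative integer $m$, define $Z[s_1,\dots,s_N;m] := \sum \zeta[s_1+c_1,\dots,s_N+c_N]$, the sum over all non-negative integers $c_1,\dots,c_N$ with $c_1+\cdots+c_N=m$. *)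

theory Defs
  imports "HOL-Analysis.Analysis"
begin

definition qnum :: "real \<Rightarrow> real \<Rightarrow> real" where
  "qnum q x = (1 - q powr x) / (1 - q)"

definition mzv_indices :: "nat \<Rightarrow> nat list set" where
  "mzv_indices N = {ks. length ks = N \<and> sorted_wrt (>) ks \<and> (\<forall>k\<in>set ks. 0 < k)}"

definition qzeta :: "real \<Rightarrow> nat list \<Rightarrow> real" where
  "qzeta q s = (\<Sum>\<^sub>\<infinity> ks \<in> mzv_indices (length s).
      \<Prod>j<length s. q powr (real (s ! j - 1) * real (ks ! j)) / (qnum q (real (ks ! j))) ^ (s ! j))"

definition qZ :: "real \<Rightarrow> nat list \<Rightarrow> nat \<Rightarrow> real" where
  "qZ q s m = (\<Sum>cs \<in> {cs. length cs = length s \<and> sum_list cs = m}.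
      qzeta q (map2 (+) s cs))"

definition dual_args :: "nat list \<Rightarrow> nat list \<Rightarrow> nat list" where
  "dual_args as bs = concat (map (\<lambda>(a, b). (a + 2) # replicate b 1) (zip as bs))"

end

theory Submission
  imports Defs
begin

(* Deform the weights by a parameter 0 \<le> x \<le> 1: in the factor of the argument s_j at index k,
   replace one of the s_j factors 1/[k]_q by 1/([k]_q - x q^k).  Expanding that factor as a
   geometric series in x q^k/[k]_q shows that the deformed value of an argument list p is the
   generating function of Z[p;m] in x.  The deformed values satisfy duality by the
   connected-sum method.  Let zeta_m(s) be the deformed sum of s with leading index k_1 = m,
   F(m) = \<Prod>_{i \<le> m} ([i]_q - x q^i) and C(m,n) = q^{mn} F(m) F(n) / F(m+n).  The connected
   sum \<Sum>_{m,n} zeta_m(s) C(m,n) zeta_n(t) does not change when a unit of weight moves from the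
   first argument of s to a new argument 1 in front of t: summed over the new index, the
   telescoping identity C(a+1,n) / ([a+1]_q - x q^{a+1}) = q^n/[n]_q (C(a,n) - C(a+1,n))
   produces exactly the factor q^n/[n]_q that the weight of n gains.  Moving the blocks
   (a+2, {1}^b) across one by one turns the pair (p, []) into ([], p').  Comparing coefficients
   of the two generating functions gives the theorem. *)

lemma suminf_ennreal_commute:
  fixes f :: "nat \<Rightarrow> nat \<Rightarrow> ennreal"
  shows "(\<Sum>i. \<Sum>j. f i j) = (\<Sum>j. \<Sum>i. f i j)"
proof -
  have "(\<Sum>i. \<Sum>j. f i j) = (\<integral>\<^sup>+i. \<integral>\<^sup>+j. f i j \<partial>count_space UNIV \<partial>count_space UNIV)"
    by (simp add: nn_integral_count_space_nat)
  also have "\<dots> = (\<integral>\<^sup>+j. \<integral>\<^sup>+i. f i j \<partial>count_space UNIV \<partial>count_space UNIV)"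
    by (rule nn_integral_count_space_nn_integral) auto
  also have "\<dots> = (\<Sum>j. \<Sum>i. f i j)"
    by (simp add: nn_integral_count_space_nat)
  finally show ?thesis .
qed

lemma suminf_ennreal_lessThan:
  assumes "\<And>i. 0 \<le> f i"
  shows "(\<Sum>i. ennreal (if i < b then f i else 0)) = ennreal (\<Sum>i<b. f i)"
proof -
  have "(\<lambda>i. if i \<in> {..<b} then f i else 0) sums (\<Sum>i\<in>{..<b}. f i)"
    by (rule sums_If_finite_set) auto
  then show ?thesis
    by (intro suminf_ennreal_eq) (auto simp: assms)
qed

lemma nonneg_has_sum_exhaustion:
  fixes f :: "'a \<Rightarrow> real"
  assumes nonneg: "\<And>a. a \<in> A \<Longrightarrow> 0 \<le> f a"
    and finite: "\<And>M. finite (B M)" and subset: "\<And>M. B M \<subseteq> A"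
    and mono: "\<And>M. B M \<subseteq> B (Suc M)"
    and exhaust: "\<And>G. finite G \<Longrightarrow> G \<subseteq> A \<Longrightarrow> \<exists>M. G \<subseteq> B M"
    and lim: "(\<lambda>M. sum f (B M)) \<longlonglongrightarrow> L"
  shows "(f has_sum L) A"
proof -
  have nonneg_B: "0 \<le> f b" if "b \<in> B M" for b M
    using that subset nonneg by blast
  have sum_B_mono: "sum f (B M) \<le> sum f (B M')" if "B M \<subseteq> B M'" for M M'
    using that nonneg_B by (intro sum_mono2[OF finite]) auto
  have "incseq (\<lambda>M. sum f (B M))"
    by (rule incseq_SucI) (intro sum_B_mono mono)
  then have sum_B_le: "sum f (B M) \<le> L" for M
    using lim by (rule incseq_le)
  have sum_le: "sum f G \<le> L" if G: "finite G" "G \<subseteq> A" for G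
  proof -
    obtain M where "G \<subseteq> B M" using exhaust[OF G] by blast
    then have "sum f G \<le> sum f (B M)"
      using G nonneg_B by (intro sum_mono2[OF finite]) auto
    then show ?thesis using sum_B_le[of M] by simp
  qed
  have bdd: "bdd_above (sum f ` {F. finite F \<and> F \<subseteq> A})"
    using sum_le by (auto simp: bdd_above_def)
  then have "(f has_sum (SUP F\<in>{F. finite F \<and> F \<subseteq> A}. sum f F)) A"
    by (intro nonneg_bdd_above_has_sum nonneg) (simp_all add: conj_commute)
  moreover have "(SUP F\<in>{F. finite F \<and> F \<subseteq> A}. sum f F) = L"
  proof (rule antisym)
    show "(SUP F\<in>{F. finite F \<and> F \<subseteq> A}. sum f F) \<le> L"
      using sum_le by (intro cSUP_least) auto
    show "L \<le> (SUP F\<in>{F. finite F \<and> F \<subseteq> A}. sum f F)"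
      using finite subset
      by (intro LIMSEQ_le_const2[OF lim] exI allI impI cSUP_upper[OF _ bdd]) auto
  qed
  ultimately show ?thesis by simp
qed

lemma summable_real_power_mult_geometric:
  assumes r: "0 < r" "r < 1"
  shows "summable (\<lambda>m. real m ^ N * r ^ m)"
proof -
  define c where "c = (1 + r) / 2"
  have "c < 1" "1 < c / r" using r by (simp_all add: c_def field_simps)
  have "(\<lambda>m. (1 + 1 / real m) ^ N) \<longlonglongrightarrow> (1 + 0) ^ N"
    by (intro tendsto_power tendsto_add tendsto_const lim_inverse_n')
  then have "eventually (\<lambda>m. (1 + 1 / real m) ^ N < c / r) sequentially"
    using \<open>1 < c / r\<close> by (intro order_tendstoD(2)) auto
  then obtain N0 where N0: "\<And>m. m \<ge> N0 \<Longrightarrow> (1 + 1 / real m) ^ N < c / r"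
    by (auto simp: eventually_sequentially)
  show ?thesis
  proof (rule summable_ratio_test[OF \<open>c < 1\<close>, of "max N0 1"])
    fix m assume m: "m \<ge> max N0 1"
    have "real (Suc m) = real m * (1 + 1 / real m)" using m by (simp add: field_simps)
    then have "norm (real (Suc m) ^ N * r ^ Suc m) = (1 + 1 / real m) ^ N * r * (real m ^ N * r ^ m)"
      using r by (simp add: power_mult_distrib)
    also have "\<dots> \<le> (c / r) * r * (real m ^ N * r ^ m)"
      using N0[of m] m r by (intro mult_right_mono) auto
    also have "\<dots> = c * norm (real m ^ N * r ^ m)" using r by simp
    finally show "norm (real (Suc m) ^ N * r ^ Suc m) \<le> c * norm (real m ^ N * r ^ m)" .
  qed
qed

lemma powser_coeffs_unique_right:
  fixes a b :: "nat \<Rightarrow> real"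
  assumes a: "\<And>x. 0 < x \<Longrightarrow> x < 1 \<Longrightarrow> (\<lambda>n. a n * x ^ n) sums f x"
    and b: "\<And>x. 0 < x \<Longrightarrow> x < 1 \<Longrightarrow> (\<lambda>n. b n * x ^ n) sums f x"
  shows "a = b"
proof -
  define d where "d n = a n - b n" for n
  have d_sums: "(\<lambda>n. d n * x ^ n) sums 0" if "0 < x" "x < 1" for x
    using sums_diff[OF a[OF that] b[OF that]] by (simp add: d_def left_diff_distrib)
  have "d M = 0" for M
  proof (induction M rule: less_induct)
    case (less M)
    define e where "e n = d (n + M)" for n
    have e_sums: "(\<lambda>n. e n * y ^ n) sums 0" if y: "0 < y" "y < 1" for y
    proof -
      have "(\<lambda>n. d (n + M) * y ^ (n + M)) sums (0 - (\<Sum>i<M. d i * y ^ i))"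
        using sums_split_initial_segment[OF d_sums[OF y], of M] by simp
      then have "(\<lambda>n. y ^ M * (e n * y ^ n)) sums (y ^ M * 0)"
        using less by (simp add: e_def power_add mult_ac)
      then show ?thesis using y by (subst (asm) sums_mult_iff) auto
    qed
    define g where "g y = (\<Sum>n. e n * y ^ n)" for y :: real
    have "isCont g 0"
      unfolding g_def using e_sums[of "1/2"]
      by (intro isCont_powser[of _ "1/2"]) (auto simp: sums_iff)
    then have "(g \<longlongrightarrow> g 0) (at_right 0)"
      by (simp add: isCont_def filterlim_at_split)
    moreover have "eventually (\<lambda>y. g y = 0) (at_right (0::real))"
      unfolding eventually_at_right_field g_def
      by (intro exI[of _ 1]) (auto intro: sums_unique[symmetric] e_sums)
    then have "(g \<longlongrightarrow> 0) (at_right 0)" by (rule tendsto_eventually)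
    ultimately have "g 0 = 0" by (rule tendsto_unique[rotated]) simp
    then show ?case by (simp add: g_def e_def)
  qed
  then show ?thesis by (auto simp: d_def)
qed

lemma dual_args_Cons:
  "dual_args (a # as) (b # bs) = (a + 2) # replicate b 1 @ dual_args as bs"
  by (simp add: dual_args_def)

lemma dual_args_snoc:
  "length as = length bs \<Longrightarrow>
   dual_args (as @ [a]) (bs @ [b]) = dual_args as bs @ (a + 2) # replicate b 1"
  by (simp add: dual_args_def)

lemma dual_args_obtain_Cons:
  assumes "as \<noteq> []" "length as = length bs"
  obtains w s where "dual_args as bs = w # s" "2 \<le> w"
  using assms by (cases as; cases bs) (auto simp: dual_args_Cons)

lemma dual_args_ge_1: "\<forall>v\<in>set (dual_args as bs). 1 \<le> v"
  by (auto simp: dual_args_def)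

section \<open>Deformed weights and the connector\<close>

locale q_deformation =
  fixes q x :: real
  assumes q_pos: "0 < q" and q_less_1: "q < 1" and x_nonneg: "0 \<le> x" and x_le_1: "x \<le> 1"
begin

definition qint :: "nat \<Rightarrow> real" where "qint k = (1 - q ^ k) / (1 - q)"

definition qden :: "nat \<Rightarrow> real" where "qden k = qint k - x * q ^ k"

definition qratio :: "nat \<Rightarrow> real" where "qratio k = q ^ k / qint k"

text \<open>The index 0 never occurs in the sums below; \<open>qinv 0 = 0\<close> keeps all weights non-negative.\<close>
definition qinv :: "nat \<Rightarrow> real" where "qinv k = (if k = 0 then 0 else 1 / qden k)"

definition weight :: "nat \<Rightarrow> nat \<Rightarrow> real" where "weight w k = qratio k ^ (w - 1) * qinv k"

definition qden_prod :: "nat \<Rightarrow> real" where "qden_prod m = (\<Prod>i\<in>{1..m}. qden i)"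

definition connector :: "nat \<Rightarrow> nat \<Rightarrow> real" where
  "connector m n = q ^ (m * n) * qden_prod m * qden_prod n / qden_prod (m + n)"

text \<open>\<open>zeta_head s m\<close> is the part of the deformed multiple sum of \<open>s\<close> with leading index \<open>k\<^sub>1 = m\<close>.\<close>
fun zeta_head :: "nat list \<Rightarrow> nat \<Rightarrow> real" where
  "zeta_head [] m = (if m = 0 then 1 else 0)"
| "zeta_head (w # s) m = (if m = 0 then 0 else weight w m * (\<Sum>m'<m. zeta_head s m'))"

text \<open>Valued in \<open>ennreal\<close> so that the double series can be rearranged without convergence side conditions.\<close>
definition connected_sum :: "nat list \<Rightarrow> nat list \<Rightarrow> ennreal" where
  "connected_sum s t = (\<Sum>m. \<Sum>n. ennreal (zeta_head s m * connector m n * zeta_head t n))"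

lemma power_le_q: "1 \<le> k \<Longrightarrow> q ^ k \<le> q"
  using power_decreasing[of 1 k q] q_pos q_less_1 by simp

lemma qint_ge_1: "1 \<le> k \<Longrightarrow> 1 \<le> qint k"
  using power_le_q[of k] q_less_1 by (simp add: qint_def)

lemma qint_le: "qint k \<le> 1 / (1 - q)"
  using q_pos q_less_1 by (simp add: qint_def divide_right_mono)

lemma qint_nonneg: "0 \<le> qint k"
  using q_pos q_less_1 by (simp add: qint_def power_le_one)

lemma qint_add: "qint (a + n) = qint n + q ^ n * qint a"
  using q_less_1 by (simp add: qint_def field_simps power_add)

lemma qden_add: "qden (a + n) = qint n + q ^ n * qden a"
  by (simp add: qden_def qint_add algebra_simps power_add)

lemma qden_ge:
  assumes "1 \<le> k"
  shows "1 - q \<le> qden k"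
proof -
  have "x * q ^ k \<le> q ^ k" using x_le_1 q_pos by (simp add: mult_left_le_one_le)
  then show ?thesis using qint_ge_1[OF assms] power_le_q[OF assms] by (simp add: qden_def)
qed

lemma qden_pos: "1 \<le> k \<Longrightarrow> 0 < qden k"
  using qden_ge q_less_1 by force

lemma qden_le: "qden k \<le> 1 / (1 - q)"
proof -
  have "0 \<le> x * q ^ k" using x_nonneg q_pos by simp
  then show ?thesis using qint_le[of k] by (simp add: qden_def)
qed

lemma qinv_nonneg: "0 \<le> qinv k"
  by (auto simp: qinv_def intro!: less_imp_le[OF qden_pos])

lemma qinv_le: "qinv k \<le> 1 / (1 - q)"
proof (cases "k = 0")
  case False
  then show ?thesis using qden_ge[of k] q_less_1 by (simp add: qinv_def frac_le)
qed (use q_less_1 in \<open>simp add: qinv_def\<close>)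

lemma qratio_nonneg: "0 \<le> qratio k"
  using q_pos qint_nonneg[of k] by (simp add: qratio_def)

lemma qratio_le_power: "qratio k \<le> q ^ k"
proof (cases "k = 0")
  case False
  then show ?thesis
    using qint_ge_1[of k] q_pos by (simp add: qratio_def divide_le_eq mult_le_cancel_left1)
qed (simp add: qratio_def qint_def)

lemma qratio_le_1: "qratio k \<le> 1"
  using qratio_le_power[of k] q_pos q_less_1 by (meson order_trans power_le_one less_imp_le)

lemma weight_nonneg: "0 \<le> weight w k"
  by (simp add: weight_def qratio_nonneg qinv_nonneg)

lemma weight_Suc: "1 \<le> w \<Longrightarrow> weight (Suc w) k = qratio k * weight w k"
  by (cases w) (auto simp: weight_def)

lemma qden_prod_pos: "0 < qden_prod m"
  unfolding qden_prod_def by (rule prod_pos) (auto intro: qden_pos)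

lemma qden_prod_Suc: "qden_prod (Suc m) = qden_prod m * qden (Suc m)"
  unfolding qden_prod_def by (simp add: atLeastAtMostSuc_conv mult.commute)

lemma connector_commute: "connector m n = connector n m"
  by (simp add: connector_def mult.commute add.commute mult.left_commute)

lemma connector_pos: "0 < connector m n"
  using qden_prod_pos q_pos by (simp add: connector_def)

lemma connector_0_right: "connector m 0 = 1"
  using qden_prod_pos[of m] by (simp add: connector_def qden_prod_def[of 0])

lemma connector_Suc:
  "connector (Suc a) n * qden (Suc a + n) = q ^ n * qden (Suc a) * connector a n"
proof -
  have "qden_prod (Suc a + n) = qden_prod (a + n) * qden (Suc a + n)"
    using qden_prod_Suc[of "a + n"] by simp
  then show ?thesis
    using qden_prod_pos[of "a + n"] qden_pos[of "Suc a + n"]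
    by (simp add: connector_def qden_prod_Suc power_add field_simps)
qed

lemma connector_telescope:
  assumes n: "1 \<le> n"
  shows "connector (Suc a) n * qinv (Suc a) = qratio n * (connector a n - connector (Suc a) n)"
proof -
  have "q ^ n * qden (Suc a) * connector a n = connector (Suc a) n * (qint n + q ^ n * qden (Suc a))"
    using connector_Suc[of a n] qden_add[of "Suc a" n] by simp
  then have "q ^ n * qden (Suc a) * (connector a n - connector (Suc a) n) = connector (Suc a) n * qint n"
    by (simp add: algebra_simps)
  then show ?thesis
    using qden_pos[of "Suc a"] qint_ge_1[OF n] q_pos by (simp add: qinv_def qratio_def field_simps)
qed

lemma connector_Suc_le:
  assumes n: "1 \<le> n"
  shows "connector (Suc a) n \<le> q * connector a n"
proof -
  have "(1 - q ^ n) * qden (Suc a) \<le> (1 - q ^ n) * (1 / (1 - q))"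
    using qden_le[of "Suc a"] q_pos q_less_1 by (intro mult_left_mono) (auto simp: power_le_one)
  then have "qden (Suc a) \<le> qden (Suc a + n)"
    using qden_add[of "Suc a" n] q_less_1 by (simp add: qint_def algebra_simps)
  then have "q ^ n * qden (Suc a) * connector a n \<le> q ^ n * qden (Suc a + n) * connector a n"
    using q_pos connector_pos[of a n] by (simp add: mult_right_mono)
  then have "connector (Suc a) n * qden (Suc a + n) \<le> q ^ n * connector a n * qden (Suc a + n)"
    using connector_Suc[of a n] by (simp add: algebra_simps)
  then have "connector (Suc a) n \<le> q ^ n * connector a n"
    using qden_pos[of "Suc a + n"] by simp
  also have "\<dots> \<le> q * connector a n"
    using power_le_q[OF n] connector_pos[of a n] by (simp add: mult_right_mono)
  finally show ?thesis .
qed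

lemma connector_le_power: "1 \<le> n \<Longrightarrow> connector a n \<le> q ^ a"
proof (induction a)
  case 0
  then show ?case using connector_0_right[of n] connector_commute by simp
next
  case (Suc a)
  have "connector (Suc a) n \<le> q * connector a n" by (rule connector_Suc_le[OF Suc.prems])
  also have "\<dots> \<le> q * q ^ a" using Suc q_pos by (intro mult_left_mono) auto
  finally show ?case by simp
qed

text \<open>Summing the telescoping identity; the tail vanishes because the connector decays like \<open>q\<^sup>a\<close>.\<close>
lemma connector_qinv_sums:
  assumes n: "1 \<le> n"
  shows "(\<lambda>a. if m < a then connector a n * qinv a else 0) sums (qratio n * connector m n)"
proof -
  define h where "h a = qratio n * connector (max a m) n" for a
  have "h \<longlonglongrightarrow> 0"
  proof (rule Lim_null_comparison)
    show "\<forall>\<^sub>F a in sequentially. norm (h a) \<le> qratio n * q ^ a"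
    proof (intro always_eventually allI)
      fix a
      have "connector (max a m) n \<le> q ^ max a m"
        by (rule connector_le_power[OF n])
      also have "\<dots> \<le> q ^ a"
        using q_pos q_less_1 by (intro power_decreasing) auto
      finally have "connector (max a m) n \<le> q ^ a" .
      then show "norm (h a) \<le> qratio n * q ^ a"
        using qratio_nonneg[of n] connector_pos[of "max a m" n] by (simp add: h_def mult_left_mono)
    qed
    show "(\<lambda>a. qratio n * q ^ a) \<longlonglongrightarrow> 0"
      using q_pos q_less_1 by (intro tendsto_mult_right_zero LIMSEQ_power_zero) auto
  qed
  then have "(\<lambda>a. h a - h (Suc a)) sums (h 0 - 0)"
    by (rule telescope_sums')
  moreover have "h a - h (Suc a) = (if m < Suc a then connector (Suc a) n * qinv (Suc a) else 0)" for a
    using connector_telescope[OF n, of a]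
    by (cases "a < m") (simp_all add: h_def max_def right_diff_distrib)
  ultimately show ?thesis
    by (simp add: h_def sums_Suc_iff[where f = "\<lambda>a. if m < a then connector a n * qinv a else 0"])
qed

section \<open>Connected sums and duality of the deformed values\<close>

lemma zeta_head_nonneg: "0 \<le> zeta_head s m"
  by (induction s arbitrary: m) (auto simp: weight_nonneg sum_nonneg)

lemma zeta_head_one_Cons: "zeta_head (1 # t) b = qinv b * (\<Sum>n<b. zeta_head t n)"
  by (simp add: weight_def qinv_def)

lemma connected_sum_commute: "connected_sum s t = connected_sum t s"
  unfolding connected_sum_def
  by (subst suminf_ennreal_commute) (simp add: connector_commute mult.commute mult.left_commute)

text \<open>The factor \<open>qratio m\<close> by which \<open>weight (Suc w) m\<close> exceeds \<open>weight w m\<close> is produced by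
  summing \<open>connector_qinv_sums\<close> over the new leading index of the right list.\<close>
lemma connected_sum_Suc_Cons:
  assumes w: "1 \<le> w"
  shows "connected_sum (Suc w # s) t = connected_sum (w # s) (1 # t)"
proof -
  define g where "g m n b = (if n < b then zeta_head (w # s) m * zeta_head t n * connector m b * qinv b else 0)"
    for m n b
  have term_nonneg: "0 \<le> zeta_head (w # s) m * zeta_head t n * connector m b * qinv b" for m n b
    by (intro mult_nonneg_nonneg zeta_head_nonneg qinv_nonneg less_imp_le[OF connector_pos])
  then have g_nonneg: "0 \<le> g m n b" for m n b
    by (simp add: g_def)
  have expand: "ennreal (zeta_head (Suc w # s) m * connector m n * zeta_head t n) = (\<Sum>b. ennreal (g m n b))"
    for m n
  proof (cases "m = 0")
    case False
    have "(\<lambda>b. zeta_head (w # s) m * zeta_head t n * (if n < b then connector b m * qinv b else 0))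
        sums (zeta_head (w # s) m * zeta_head t n * (qratio m * connector n m))"
      using False by (intro sums_mult connector_qinv_sums) simp
    moreover have "(\<lambda>b. zeta_head (w # s) m * zeta_head t n * (if n < b then connector b m * qinv b else 0))
        = g m n"
      by (simp add: g_def fun_eq_iff connector_commute[of _ m] del: zeta_head.simps)
    moreover have "zeta_head (Suc w # s) m = qratio m * zeta_head (w # s) m"
      using False weight_Suc[OF w] by simp
    ultimately have "(g m n) sums (zeta_head (Suc w # s) m * connector m n * zeta_head t n)"
      by (simp only: connector_commute[of n m] ac_simps)
    then show ?thesis
      by (rule suminf_ennreal_eq[OF g_nonneg, symmetric])
  qed (simp add: g_def cong: if_cong)
  have collapse: "(\<Sum>n. ennreal (g m n b)) = ennreal (zeta_head (w # s) m * connector m b * zeta_head (1 # t) b)"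
    for m b
    unfolding g_def zeta_head_one_Cons
    by (subst suminf_ennreal_lessThan[OF term_nonneg])
       (simp add: sum_distrib_left sum_distrib_right mult_ac del: zeta_head.simps)
  have "connected_sum (Suc w # s) t = (\<Sum>m. \<Sum>n. \<Sum>b. ennreal (g m n b))"
    unfolding connected_sum_def by (simp only: expand)
  also have "\<dots> = (\<Sum>m. \<Sum>b. \<Sum>n. ennreal (g m n b))"
    by (subst suminf_ennreal_commute) (rule refl)
  also have "\<dots> = connected_sum (w # s) (1 # t)"
    unfolding connected_sum_def by (simp only: collapse)
  finally show ?thesis .
qed

lemma connected_sum_one_Cons:
  "1 \<le> c \<Longrightarrow> connected_sum (1 # s) (c # t) = connected_sum s (Suc c # t)"
  using connected_sum_Suc_Cons[of c t s] connected_sum_commute by metis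

lemma connected_sum_replicate_one:
  "1 \<le> c \<Longrightarrow> connected_sum (replicate b 1 @ s) (c # t) = connected_sum s ((c + b) # t)"
proof (induction b arbitrary: c)
  case (Suc b)
  then show ?case
    using connected_sum_one_Cons[OF Suc.prems, of "replicate b 1 @ s" t] Suc.IH[of "Suc c"] by simp
qed simp

lemma connected_sum_split_Cons:
  "connected_sum (Suc k # s) t = connected_sum (1 # s) (replicate k 1 @ t)"
proof (induction k arbitrary: t)
  case (Suc k)
  have "connected_sum (Suc (Suc k) # s) t = connected_sum (Suc k # s) (1 # t)"
    by (rule connected_sum_Suc_Cons) simp
  also have "\<dots> = connected_sum (1 # s) (replicate (Suc k) 1 @ t)"
    using Suc.IH[of "1 # t"] by (simp add: replicate_app_Cons_same)
  finally show ?case .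
qed simp

lemma connected_sum_block:
  "connected_sum ((a + 2) # replicate b 1 @ s) t = connected_sum s ((b + 2) # replicate a 1 @ t)"
proof -
  have "connected_sum ((a + 2) # replicate b 1 @ s) t
      = connected_sum (replicate (Suc b) 1 @ s) (1 # replicate a 1 @ t)"
    using connected_sum_split_Cons[of "Suc a" "replicate b 1 @ s" t] by simp
  also have "\<dots> = connected_sum s ((b + 2) # replicate a 1 @ t)"
    by (subst connected_sum_replicate_one) simp_all
  finally show ?thesis .
qed

lemma connected_sum_dual_args:
  "length as = length bs \<Longrightarrow>
   connected_sum (dual_args as bs @ s) t = connected_sum s (dual_args (rev bs) (rev as) @ t)"
proof (induction as arbitrary: bs s t)
  case Nil
  then show ?case by (simp add: dual_args_def)
next
  case (Cons a as)
  then obtain b bs' where bs: "bs = b # bs'" and len: "length as = length bs'"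
    by (cases bs) auto
  have "connected_sum (dual_args (a # as) bs @ s) t
      = connected_sum ((a + 2) # replicate b 1 @ dual_args as bs' @ s) t"
    by (simp add: bs dual_args_Cons)
  also have "\<dots> = connected_sum (dual_args as bs' @ s) ((b + 2) # replicate a 1 @ t)"
    by (rule connected_sum_block)
  also have "\<dots> = connected_sum s (dual_args (rev bs') (rev as) @ (b + 2) # replicate a 1 @ t)"
    by (rule Cons.IH[OF len])
  also have "\<dots> = connected_sum s (dual_args (rev bs) (rev (a # as)) @ t)"
    using dual_args_snoc[of "rev bs'" "rev as" b a] len by (simp add: bs)
  finally show ?case .
qed

lemma connected_sum_Nil: "connected_sum s [] = (\<Sum>m. ennreal (zeta_head s m))"
proof -
  have "(\<lambda>n. zeta_head s m * connector m n * zeta_head [] n) sums zeta_head s m" for m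
    using sums_single[of 0 "\<lambda>n. zeta_head s m * connector m n"]
    by (simp add: connector_0_right if_distrib cong: if_cong)
  then have "(\<Sum>n. ennreal (zeta_head s m * connector m n * zeta_head [] n)) = ennreal (zeta_head s m)" for m
    by (intro suminf_ennreal_eq) (auto simp: zeta_head_nonneg less_imp_le[OF connector_pos])
  then show ?thesis unfolding connected_sum_def by simp
qed

lemma suminf_ennreal_zeta_head_dual_args:
  "length as = length bs \<Longrightarrow>
   (\<Sum>m. ennreal (zeta_head (dual_args as bs) m)) = (\<Sum>m. ennreal (zeta_head (dual_args (rev bs) (rev as)) m))"
  using connected_sum_dual_args[of as bs "[]" "[]"] connected_sum_commute[of "[]"]
  by (simp add: connected_sum_Nil)

lemma weight_le: "weight w k \<le> 1 / (1 - q)"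
proof -
  have "qratio k ^ (w - 1) \<le> 1" using qratio_nonneg qratio_le_1 by (rule power_le_one)
  then have "qratio k ^ (w - 1) * qinv k \<le> 1 * (1 / (1 - q))"
    using qinv_le[of k] qinv_nonneg[of k] q_less_1 by (intro mult_mono) auto
  then show ?thesis by (simp add: weight_def)
qed

lemma weight_le_power: "2 \<le> w \<Longrightarrow> weight w k \<le> q ^ k / (1 - q)"
proof -
  assume w: "2 \<le> w"
  have "qratio k ^ (w - 1) \<le> qratio k ^ 1"
    using qratio_nonneg qratio_le_1 w by (intro power_decreasing) auto
  also have "\<dots> \<le> q ^ k" using qratio_le_power by simp
  finally have "qratio k ^ (w - 1) * qinv k \<le> q ^ k * (1 / (1 - q))"
    using qinv_le[of k] qinv_nonneg[of k] q_pos by (intro mult_mono) auto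
  then show ?thesis by (simp add: weight_def)
qed

lemma sum_zeta_head_le: "(\<Sum>m'<m. zeta_head s m') \<le> (real m / (1 - q)) ^ length s"
proof (induction s arbitrary: m)
  case Nil
  show ?case by (simp add: sum.If_cases)
next
  case (Cons w s)
  have K: "1 \<le> 1 / (1 - q)" using q_pos q_less_1 by simp
  have "zeta_head (w # s) m' \<le> 1 / (1 - q) * (real m / (1 - q)) ^ length s" if "m' < m" for m'
  proof -
    have "zeta_head (w # s) m' \<le> weight w m' * (\<Sum>m''<m'. zeta_head s m'')"
      by (simp add: weight_nonneg sum_nonneg zeta_head_nonneg)
    also have "\<dots> \<le> 1 / (1 - q) * (\<Sum>m''<m'. zeta_head s m'')"
      by (intro mult_right_mono weight_le sum_nonneg zeta_head_nonneg)
    also have "\<dots> \<le> 1 / (1 - q) * (real m' / (1 - q)) ^ length s"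
      using Cons.IH[of m'] q_less_1 by (intro mult_left_mono) auto
    also have "\<dots> \<le> 1 / (1 - q) * (real m / (1 - q)) ^ length s"
      by (intro mult_left_mono power_mono divide_right_mono) (use K that q_less_1 in auto)
    finally show ?thesis .
  qed
  then have "(\<Sum>m'<m. zeta_head (w # s) m') \<le> (\<Sum>m'<m. 1 / (1 - q) * (real m / (1 - q)) ^ length s)"
    by (intro sum_mono) simp
  also have "\<dots> = (real m / (1 - q)) ^ length (w # s)"
    using q_less_1 by (simp add: field_simps)
  finally show ?case .
qed

text \<open>A leading argument \<open>\<ge> 2\<close> gives the factor \<open>q\<^sup>m\<close>, which beats the polynomial growth of the rest.\<close>
lemma summable_zeta_head:
  assumes w: "2 \<le> w"
  shows "summable (zeta_head (w # s))"
proof (rule summable_comparison_test)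
  have "norm (zeta_head (w # s) m) \<le> real m ^ length s * q ^ m / (1 - q) ^ Suc (length s)" for m
  proof -
    have "norm (zeta_head (w # s) m) \<le> weight w m * (\<Sum>m'<m. zeta_head s m')"
      by (simp add: zeta_head_nonneg weight_nonneg sum_nonneg)
    also have "\<dots> \<le> (q ^ m / (1 - q)) * (real m / (1 - q)) ^ length s"
      using weight_le_power[OF w, of m] sum_zeta_head_le[of s m] q_pos q_less_1
      by (intro mult_mono) (auto intro!: sum_nonneg zeta_head_nonneg)
    also have "\<dots> = real m ^ length s * q ^ m / (1 - q) ^ Suc (length s)"
      by (simp add: power_divide)
    finally show ?thesis .
  qed
  then show "\<exists>N. \<forall>m\<ge>N. norm (zeta_head (w # s) m) \<le> real m ^ length s * q ^ m / (1 - q) ^ Suc (length s)"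
    by blast
  show "summable (\<lambda>m. real m ^ length s * q ^ m / (1 - q) ^ Suc (length s))"
    using q_pos q_less_1 by (intro summable_divide summable_real_power_mult_geometric)
qed

lemma suminf_zeta_head_dual_args:
  assumes "length as = length bs"
  shows "(\<Sum>m. zeta_head (dual_args as bs) m) = (\<Sum>m. zeta_head (dual_args (rev bs) (rev as)) m)"
proof (cases "as = []")
  case False
  obtain w s where p: "dual_args as bs = w # s" "2 \<le> w"
    using False assms by (rule dual_args_obtain_Cons)
  have "rev bs \<noteq> []" "length (rev bs) = length (rev as)" using False assms by auto
  then obtain w' s' where p': "dual_args (rev bs) (rev as) = w' # s'" "2 \<le> w'"
    by (rule dual_args_obtain_Cons)
  have "summable (zeta_head (dual_args as bs))" "summable (zeta_head (dual_args (rev bs) (rev as)))"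
    by (simp_all add: p p' p(2) p'(2) summable_zeta_head)
  then show ?thesis
    using suminf_ennreal_zeta_head_dual_args[OF assms]
    by (simp add: suminf_ennreal2 zeta_head_nonneg suminf_nonneg)
qed (use assms in simp)

end

section \<open>The undeformed values\<close>

definition lead_index :: "nat list \<Rightarrow> nat" where "lead_index ks = (case ks of [] \<Rightarrow> 0 | k # _ \<Rightarrow> k)"

definition lead_indices :: "nat \<Rightarrow> nat \<Rightarrow> nat list set" where
  "lead_indices N m = {ks \<in> mzv_indices N. lead_index ks = m}"

definition qzeta_term :: "real \<Rightarrow> nat list \<Rightarrow> nat list \<Rightarrow> real" where
  "qzeta_term q s ks =
    (\<Prod>j<length s. q powr (real (s ! j - 1) * real (ks ! j)) / (qnum q (real (ks ! j))) ^ (s ! j))"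

lemma Cons_mem_mzv_indices_iff:
  "k # ks \<in> mzv_indices (Suc N) \<longleftrightarrow> ks \<in> mzv_indices N \<and> 0 < k \<and> (\<forall>y\<in>set ks. y < k)"
  by (auto simp: mzv_indices_def)

lemma mem_mzv_indices_le_lead_index: "ks \<in> mzv_indices N \<Longrightarrow> y \<in> set ks \<Longrightarrow> y \<le> lead_index ks"
  by (cases ks) (auto simp: mzv_indices_def lead_index_def)

lemma lead_indices_0: "lead_indices 0 m = (if m = 0 then {[]} else {})"
  by (auto simp: lead_indices_def mzv_indices_def lead_index_def)

lemma lead_indices_Suc_0: "lead_indices (Suc N) 0 = {}"
  by (auto simp: lead_indices_def lead_index_def mzv_indices_def split: list.splits)

lemma lead_indices_Suc:
  assumes m: "1 \<le> m"
  shows "lead_indices (Suc N) m = (\<lambda>ks. m # ks) ` (\<Union>m'<m. lead_indices N m')"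
proof (intro equalityI subsetI)
  fix ks assume ks: "ks \<in> lead_indices (Suc N) m"
  then obtain ks' where ks_eq: "ks = m # ks'" and ks': "ks' \<in> mzv_indices N" "\<forall>y\<in>set ks'. y < m"
    by (cases ks) (auto simp: lead_indices_def lead_index_def mzv_indices_def)
  have "lead_index ks' < m"
    using ks' m by (cases ks') (auto simp: lead_index_def)
  then show "ks \<in> (\<lambda>ks. m # ks) ` (\<Union>m'<m. lead_indices N m')"
    using ks_eq ks' by (auto simp: lead_indices_def)
next
  fix ks assume "ks \<in> (\<lambda>ks. m # ks) ` (\<Union>m'<m. lead_indices N m')"
  then obtain ks' where ks_eq: "ks = m # ks'" and ks': "ks' \<in> mzv_indices N" "lead_index ks' < m"
    by (auto simp: lead_indices_def)
  then have "\<forall>y\<in>set ks'. y < m" using mem_mzv_indices_le_lead_index by force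
  then show "ks \<in> lead_indices (Suc N) m"
    using ks_eq ks' m by (auto simp: lead_indices_def Cons_mem_mzv_indices_iff lead_index_def)
qed

lemma finite_lead_indices: "finite (lead_indices N m)"
proof (rule finite_subset)
  show "lead_indices N m \<subseteq> {ks. set ks \<subseteq> {..m} \<and> length ks = N}"
    using mem_mzv_indices_le_lead_index by (fastforce simp: lead_indices_def mzv_indices_def)
qed (rule finite_lists_length_eq, simp)

lemma qzeta_term_Cons:
  "qzeta_term q (w # s) (k # ks) = q powr (real (w - 1) * real k) / (qnum q (real k)) ^ w * qzeta_term q s ks"
  by (simp only: qzeta_term_def length_Cons prod.lessThan_Suc_shift) simp

lemma qzeta_factor_eq_weight:
  assumes q: "0 < q" "q < 1" and "1 \<le> w" "1 \<le> m"
  shows "q powr (real (w - 1) * real m) / (qnum q (real m)) ^ w = q_deformation.weight q 0 w m"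
proof -
  interpret q_deformation q 0 using q by unfold_locales auto
  have "qnum q (real m) = qint m"
    using q by (simp add: qnum_def qint_def powr_realpow)
  moreover have "q powr (real (w - 1) * real m) = (q ^ m) ^ (w - 1)"
    using q by (simp add: powr_realpow[symmetric] powr_powr mult.commute)
  moreover obtain v where "w = Suc v" using \<open>1 \<le> w\<close> by (cases w) auto
  moreover have "0 < qint m" using qint_ge_1[OF \<open>1 \<le> m\<close>] by simp
  ultimately show ?thesis
    using \<open>1 \<le> m\<close> by (simp add: weight_def qratio_def qinv_def qden_def power_divide field_simps)
qed

lemma zeta_head_0_eq_sum_lead_indices:
  assumes q: "0 < q" "q < 1" and pos: "\<forall>w\<in>set s. 1 \<le> w"
  shows "q_deformation.zeta_head q 0 s m = (\<Sum>ks\<in>lead_indices (length s) m. qzeta_term q s ks)"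
  using pos
proof (induction s arbitrary: m)
  case Nil
  then show ?case
    using q by (simp add: q_deformation.zeta_head.simps[of q 0] q_deformation_def lead_indices_0 qzeta_term_def)
next
  case (Cons w s)
  interpret q_deformation q 0 using q by unfold_locales auto
  show ?case
  proof (cases "m = 0")
    case False
    then have m: "1 \<le> m" by simp
    have w: "1 \<le> w" using Cons.prems by simp
    have "inj_on (\<lambda>ks. m # ks) (\<Union>m'<m. lead_indices (length s) m')" by (auto simp: inj_on_def)
    then have "(\<Sum>ks\<in>lead_indices (length (w # s)) m. qzeta_term q (w # s) ks)
        = (\<Sum>ks\<in>(\<Union>m'<m. lead_indices (length s) m'). qzeta_term q (w # s) (m # ks))"
      using lead_indices_Suc[OF m, of "length s"] by (simp add: sum.reindex)
    also have "\<dots> = weight w m * (\<Sum>ks\<in>(\<Union>m'<m. lead_indices (length s) m'). qzeta_term q s ks)"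
      by (simp only: qzeta_term_Cons qzeta_factor_eq_weight[OF q w m] sum_distrib_left)
    also have "(\<Sum>ks\<in>(\<Union>m'<m. lead_indices (length s) m'). qzeta_term q s ks)
        = (\<Sum>m'<m. \<Sum>ks\<in>lead_indices (length s) m'. qzeta_term q s ks)"
      using finite_lead_indices by (intro sum.UNION_disjoint) (auto simp: lead_indices_def)
    also have "\<dots> = (\<Sum>m'<m. zeta_head s m')"
      using Cons.IH Cons.prems by simp
    finally show ?thesis using False by simp
  qed (simp add: lead_indices_Suc_0)
qed

lemma qzeta_eq_suminf_zeta_head:
  assumes q: "0 < q" "q < 1" and pos: "\<forall>w\<in>set s. 1 \<le> w"
    and summable: "summable (q_deformation.zeta_head q 0 s)"
  shows "qzeta q s = suminf (q_deformation.zeta_head q 0 s)"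
proof -
  interpret q_deformation q 0 using q by unfold_locales auto
  define B where "B M = (\<Union>m<M. lead_indices (length s) m)" for M
  have "(qzeta_term q s has_sum suminf (zeta_head s)) (mzv_indices (length s))"
  proof (rule nonneg_has_sum_exhaustion)
    show "0 \<le> qzeta_term q s ks" for ks
      unfolding qzeta_term_def qnum_def using q
      by (intro prod_nonneg divide_nonneg_nonneg zero_le_power) (auto simp: powr_realpow power_le_one)
    show "finite (B M)" for M by (simp add: B_def finite_lead_indices)
    show "B M \<subseteq> mzv_indices (length s)" for M by (auto simp: B_def lead_indices_def)
    show "B M \<subseteq> B (Suc M)" for M unfolding B_def by (intro UN_mono) auto
  next
    fix G assume G: "finite G" "G \<subseteq> mzv_indices (length s)"
    then have "G \<subseteq> B (Suc (Max (lead_index ` G)))"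
      by (auto simp: B_def lead_indices_def le_imp_less_Suc)
    then show "\<exists>M. G \<subseteq> B M" by blast
  next
    have "sum (qzeta_term q s) (B M) = (\<Sum>m<M. zeta_head s m)" for M
      unfolding B_def using finite_lead_indices
      by (subst sum.UNION_disjoint) (auto simp: lead_indices_def zeta_head_0_eq_sum_lead_indices[OF q pos])
    then show "(\<lambda>M. sum (qzeta_term q s) (B M)) \<longlonglongrightarrow> suminf (zeta_head s)"
      using summable_LIMSEQ[OF summable] by simp
  qed
  then show ?thesis
    unfolding qzeta_def qzeta_term_def[symmetric] by (rule infsumI)
qed

section \<open>Generating functions\<close>

definition weak_compositions :: "nat \<Rightarrow> nat \<Rightarrow> nat list set" where
  "weak_compositions N M = {cs. length cs = N \<and> sum_list cs = M}"

definition qZ_head :: "real \<Rightarrow> nat list \<Rightarrow> nat \<Rightarrow> nat \<Rightarrow> real" where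
  "qZ_head q s M m = (\<Sum>c\<in>weak_compositions (length s) M. q_deformation.zeta_head q 0 (map2 (+) s c) m)"

lemma finite_weak_compositions: "finite (weak_compositions N M)"
proof (rule finite_subset)
  show "weak_compositions N M \<subseteq> {cs. set cs \<subseteq> {..M} \<and> length cs = N}"
    by (auto simp: weak_compositions_def member_le_sum_list)
qed (rule finite_lists_length_eq, simp)

lemma weak_compositions_0: "weak_compositions 0 M = (if M = 0 then {[]} else {})"
  by (auto simp: weak_compositions_def)

lemma weak_compositions_Suc:
  "weak_compositions (Suc N) M = (\<Union>c\<in>{..M}. (\<lambda>cs. c # cs) ` weak_compositions N (M - c))"
proof (intro equalityI subsetI)
  fix cs assume "cs \<in> weak_compositions (Suc N) M"
  then obtain c cs' where "cs = c # cs'" "length cs' = N" "c + sum_list cs' = M"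
    by (cases cs) (auto simp: weak_compositions_def)
  moreover have "c \<in> {..M}" "cs' \<in> weak_compositions N (M - c)"
    using calculation by (auto simp: weak_compositions_def)
  ultimately show "cs \<in> (\<Union>c\<in>{..M}. (\<lambda>cs. c # cs) ` weak_compositions N (M - c))"
    by blast
qed (auto simp: weak_compositions_def)

lemma map2_plus_ge_1: "\<forall>w\<in>set p. (1::nat) \<le> w \<Longrightarrow> \<forall>w\<in>set (map2 (+) p c). 1 \<le> w"
  by (auto simp: set_zip intro: trans_le_add1)

lemma qZ_head_Nil:
  assumes q: "0 < q" "q < 1"
  shows "qZ_head q [] M m = (if M = 0 \<and> m = 0 then 1 else 0)"
proof -
  interpret q_deformation q 0 using q by unfold_locales auto
  show ?thesis by (simp add: qZ_head_def weak_compositions_0)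
qed

lemma qZ_head_Cons_0:
  assumes q: "0 < q" "q < 1"
  shows "qZ_head q (w # s) M 0 = 0"
proof -
  interpret q_deformation q 0 using q by unfold_locales auto
  show ?thesis
    unfolding qZ_head_def by (intro sum.neutral) (auto simp: weak_compositions_def length_Suc_conv)
qed

lemma qZ_head_Cons:
  assumes q: "0 < q" "q < 1" and m: "1 \<le> m"
  shows "qZ_head q (w # s) M m =
    (\<Sum>c\<le>M. q_deformation.weight q 0 (w + c) m * (\<Sum>m'<m. qZ_head q s (M - c) m'))"
proof -
  interpret q_deformation q 0 using q by unfold_locales auto
  have "qZ_head q (w # s) M m
      = (\<Sum>c\<le>M. \<Sum>cs\<in>(\<lambda>cs. c # cs) ` weak_compositions (length s) (M - c). zeta_head (map2 (+) (w # s) cs) m)"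
    unfolding qZ_head_def length_Cons weak_compositions_Suc
    by (rule sum.UNION_disjoint) (auto simp: finite_weak_compositions)
  also have "\<dots> = (\<Sum>c\<le>M. \<Sum>cs\<in>weak_compositions (length s) (M - c).
      weight (w + c) m * (\<Sum>m'<m. zeta_head (map2 (+) s cs) m'))"
    using m by (simp add: sum.reindex inj_on_def)
  also have "\<dots> = (\<Sum>c\<le>M. weight (w + c) m * (\<Sum>m'<m. qZ_head q s (M - c) m'))"
    by (simp add: qZ_head_def sum_distrib_left sum.swap[of _ "{..<m}"])
  finally show ?thesis .
qed

text \<open>The geometric expansion of \<open>1 / ([m]\<^sub>q - x q\<^sup>m)\<close> in powers of \<open>x q\<^sup>m / [m]\<^sub>q\<close>.\<close>
lemma weight_deformation_sums:
  assumes q: "0 < q" "q < 1" and x: "0 \<le> x" "x \<le> 1" and w: "1 \<le> w" and m: "1 \<le> m"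
  shows "(\<lambda>c. x ^ c * q_deformation.weight q 0 (w + c) m) sums q_deformation.weight q x w m"
proof -
  interpret Z0: q_deformation q 0 using q by unfold_locales auto
  interpret Zx: q_deformation q x using q x by unfold_locales auto
  have qint_pos: "0 < Z0.qint m" using Z0.qint_ge_1[OF m] by simp
  have "x * Z0.qratio m \<le> q"
    using mult_left_le_one_le[OF Z0.qratio_nonneg[of m] x] Z0.qratio_le_power[of m] Z0.power_le_q[OF m]
    by linarith
  then have ratio: "norm (x * Z0.qratio m) < 1"
    using q x Z0.qratio_nonneg[of m] by simp
  have term_eq: "x ^ c * Z0.weight (w + c) m = Z0.weight w m * (x * Z0.qratio m) ^ c" for c
  proof -
    have "Z0.qratio m ^ (w + c - 1) = Z0.qratio m ^ (w - 1) * Z0.qratio m ^ c"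
      using w by (simp add: power_add[symmetric])
    then show ?thesis by (simp add: Z0.weight_def power_mult_distrib mult_ac)
  qed
  have "Z0.weight w m * (1 / (1 - x * Z0.qratio m)) = Zx.weight w m"
  proof -
    have "Zx.qden m / Z0.qint m = 1 - x * Z0.qratio m"
      using qint_pos by (simp add: Zx.qden_def Z0.qratio_def diff_divide_distrib)
    moreover have "Z0.qden m = Z0.qint m" by (simp add: Z0.qden_def)
    ultimately show ?thesis
      using m qint_pos Zx.qden_pos[OF m]
      by (simp add: Z0.weight_def Zx.weight_def Z0.qinv_def Zx.qinv_def field_simps)
  qed
  then show ?thesis
    using sums_mult[OF geometric_sums[OF ratio], of "Z0.weight w m"] by (simp add: term_eq)
qed

lemma qZ_head_powser_sums:
  assumes q: "0 < q" "q < 1" and x: "0 \<le> x" "x \<le> 1" and pos: "\<forall>w\<in>set s. 1 \<le> w"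
  shows "(\<lambda>M. x ^ M * qZ_head q s M m) sums q_deformation.zeta_head q x s m"
  using pos
proof (induction s arbitrary: m)
  case Nil
  interpret Zx: q_deformation q x using q x by unfold_locales auto
  have "(\<lambda>M. x ^ M * qZ_head q [] M m) = (\<lambda>M. if M = 0 then Zx.zeta_head [] m else 0)"
    by (simp add: fun_eq_iff qZ_head_Nil[OF q])
  then show ?case using sums_single[of 0 "\<lambda>_. Zx.zeta_head [] m"] by simp
next
  case (Cons w s)
  interpret Z0: q_deformation q 0 using q by unfold_locales auto
  interpret Zx: q_deformation q x using q x by unfold_locales auto
  have w: "1 \<le> w" using Cons.prems by simp
  have qZ_head_nonneg: "0 \<le> qZ_head q s M m'" for M m'
    unfolding qZ_head_def by (intro sum_nonneg Z0.zeta_head_nonneg)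
  show ?case
  proof (cases "m = 0")
    case True
    then show ?thesis
      by (simp add: qZ_head_Cons_0[OF q])
  next
    case False
    then have m: "1 \<le> m" by simp
    define a where "a c = x ^ c * Z0.weight (w + c) m" for c
    define b where "b M = x ^ M * (\<Sum>m'<m. qZ_head q s M m')" for M
    have "a sums Zx.weight w m" unfolding a_def by (rule weight_deformation_sums[OF q x w m])
    moreover have "b sums (\<Sum>m'<m. Zx.zeta_head s m')"
      unfolding b_def sum_distrib_left using Cons.IH Cons.prems by (intro sums_sum) simp
    moreover have "0 \<le> a c" "0 \<le> b c" for c
      using x qZ_head_nonneg by (simp_all add: a_def b_def Z0.weight_nonneg sum_nonneg)
    ultimately have "(\<lambda>k. \<Sum>i\<le>k. a i * b (k - i)) sums (Zx.weight w m * (\<Sum>m'<m. Zx.zeta_head s m'))"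
      using Cauchy_product_sums[of a b] by (simp add: sums_iff)
    moreover have "(\<Sum>i\<le>k. a i * b (k - i)) = x ^ k * qZ_head q (w # s) k m" for k
    proof -
      have "a i * b (k - i) = x ^ k * (Z0.weight (w + i) m * (\<Sum>m'<m. qZ_head q s (k - i) m'))"
        if "i \<le> k" for i
        using that by (simp add: a_def b_def power_add[symmetric] mult_ac)
      then show ?thesis
        by (simp add: qZ_head_Cons[OF q m] sum_distrib_left)
    qed
    ultimately show ?thesis using m by simp
  qed
qed

lemma qZ_head_sums_qZ:
  assumes q: "0 < q" "q < 1" and pos: "\<forall>v\<in>set p. 1 \<le> v" and p: "p = w # s" "2 \<le> w"
  shows "(\<lambda>m. qZ_head q p M m) sums qZ q p M"
proof -
  interpret Z0: q_deformation q 0 using q by unfold_locales auto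
  have summable: "summable (Z0.zeta_head (map2 (+) p c))" if c: "c \<in> weak_compositions (length p) M" for c
  proof -
    obtain c0 c' where "c = c0 # c'"
      using c p by (cases c) (auto simp: weak_compositions_def)
    then show ?thesis
      using p by (simp add: Z0.summable_zeta_head)
  qed
  have "qZ q p M = (\<Sum>c\<in>weak_compositions (length p) M. suminf (Z0.zeta_head (map2 (+) p c)))"
    unfolding qZ_def weak_compositions_def[symmetric]
    by (intro sum.cong refl qzeta_eq_suminf_zeta_head[OF q map2_plus_ge_1[OF pos] summable])
  also have "\<dots> = (\<Sum>m. qZ_head q p M m)"
    unfolding qZ_head_def using summable by (rule suminf_sum[symmetric])
  finally show ?thesis
    unfolding qZ_head_def using summable by (simp add: sums_iff summable_sum)
qed

text \<open>Both sides are double series of non-negative terms, which are interchanged in \<open>ennreal\<close>.\<close>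
lemma qZ_powser_sums:
  assumes q: "0 < q" "q < 1" and x: "0 < x" "x \<le> 1"
    and pos: "\<forall>v\<in>set p. 1 \<le> v" and p: "p = w # s" "2 \<le> w"
  shows "(\<lambda>M. qZ q p M * x ^ M) sums (\<Sum>m. q_deformation.zeta_head q x p m)"
proof -
  interpret Z0: q_deformation q 0 using q by unfold_locales auto
  interpret Zx: q_deformation q x using q x by unfold_locales auto
  have term_nonneg: "0 \<le> x ^ M * qZ_head q p M m" for M m
    unfolding qZ_head_def using x by (intro mult_nonneg_nonneg sum_nonneg Z0.zeta_head_nonneg) simp_all
  have sums_m: "(\<lambda>m. x ^ M * qZ_head q p M m) sums (x ^ M * qZ q p M)" for M
    by (rule sums_mult[OF qZ_head_sums_qZ[OF q pos p]])
  have sums_M: "(\<lambda>M. x ^ M * qZ_head q p M m) sums Zx.zeta_head p m" for m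
    using x by (intro qZ_head_powser_sums[OF q _ _ pos]) auto
  have summable: "summable (Zx.zeta_head p)"
    unfolding p(1) by (rule Zx.summable_zeta_head[OF p(2)])
  have "(\<Sum>M. ennreal (x ^ M * qZ q p M)) = (\<Sum>M. \<Sum>m. ennreal (x ^ M * qZ_head q p M m))"
    by (simp only: suminf_ennreal_eq[OF term_nonneg sums_m])
  also have "\<dots> = (\<Sum>m. \<Sum>M. ennreal (x ^ M * qZ_head q p M m))"
    by (rule suminf_ennreal_commute)
  also have "\<dots> = (\<Sum>m. ennreal (Zx.zeta_head p m))"
    by (simp only: suminf_ennreal_eq[OF term_nonneg sums_M])
  also have "\<dots> = ennreal (\<Sum>m. Zx.zeta_head p m)"
    by (rule suminf_ennreal2[OF Zx.zeta_head_nonneg summable])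
  finally have "(\<lambda>M. ennreal (x ^ M * qZ q p M)) sums ennreal (\<Sum>m. Zx.zeta_head p m)"
    by (metis summableI summable_sums)
  moreover have "0 \<le> x ^ M * qZ q p M" for M
    by (rule sums_le[OF term_nonneg sums_zero sums_m])
  moreover have "0 \<le> (\<Sum>m. Zx.zeta_head p m)"
    by (rule suminf_nonneg[OF summable Zx.zeta_head_nonneg])
  ultimately have "(\<lambda>M. x ^ M * qZ q p M) sums (\<Sum>m. Zx.zeta_head p m)"
    by (subst (asm) sums_ennreal) auto
  then show ?thesis by (simp add: mult.commute)
qed

theorem theorem3p1:
  fixes q :: real and n :: nat and as bs :: "nat list" and m :: nat
  assumes "0 < q" "q < 1" "n \<ge> 1" "length as = n" "length bs = n"
  shows "qZ q (dual_args as bs) m = qZ q (dual_args (rev bs) (rev as)) m"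
proof -
  have q: "0 < q" "q < 1" and len: "length as = length bs" "length (rev bs) = length (rev as)"
    and "as \<noteq> []" "rev bs \<noteq> []"
    using assms by auto
  obtain w s where p: "dual_args as bs = w # s" "2 \<le> w"
    using \<open>as \<noteq> []\<close> len(1) by (rule dual_args_obtain_Cons)
  obtain w' s' where p': "dual_args (rev bs) (rev as) = w' # s'" "2 \<le> w'"
    using \<open>rev bs \<noteq> []\<close> len(2) by (rule dual_args_obtain_Cons)
  have "(\<lambda>M. qZ q (dual_args as bs) M) = (\<lambda>M. qZ q (dual_args (rev bs) (rev as)) M)"
  proof (rule powser_coeffs_unique_right)
    fix x :: real assume x: "0 < x" "x < 1"
    interpret q_deformation q x using q x by unfold_locales auto
    show "(\<lambda>M. qZ q (dual_args as bs) M * x ^ M) sums (\<Sum>m. zeta_head (dual_args as bs) m)"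
      using x by (intro qZ_powser_sums[OF q _ _ dual_args_ge_1 p]) auto
    show "(\<lambda>M. qZ q (dual_args (rev bs) (rev as)) M * x ^ M) sums (\<Sum>m. zeta_head (dual_args as bs) m)"
      unfolding suminf_zeta_head_dual_args[OF len(1)]
      using x by (intro qZ_powser_sums[OF q _ _ dual_args_ge_1 p']) auto
  qed
  then show ?thesis by metis
qed

end
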